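(* Let $\mathcal{L}:\mathbb{R}^d\to\mathbb{R}$ be differentiable on $\mathbb{R}^d\setminus\{\mathbf{0}\}$ and radially invariant ($\mathcal{L}(\rho\mathbf{x})=\mathcal{L}(\mathbf{x})$ for all $\rho>0$). Consider the generic optimization scheme $$\mathbf{x}_{k+1}=\mathbf{x}_k-\eta_k\,\mathbf{a}_k\oslash\mathbf{b}_k,\qquad \mathbf{a}_k=\beta\mathbf{a}_{k-1}+\nabla\mathcal{L}(\mathbf{x}_k)+\lambda\mathbf{x}_k,$$ with $\eta_k>0$, $\beta,\lambda\in\mathbb{R}$, $\mathbf{a}_{-1}=\mathbf{0}$, and $\mathbf{b}_k\in\mathbb{R}^d$ having all entries nonzero. Fix a step $k$ with $\mathbf{x}_k\neq\mathbf{0}$, write $r_k=\|\mathbf{x}_k\|$, $\mathbf{u}_k=\mathbf{x}_k/r_k$, and define $$\mathbf{c}_k=r_k\,\mathbf{a}_k\oslash\frac{\mathbf{b}_k}{d^{-1/2}\|\mathbf{b}_k\|},\qquad A_k=\frac{\eta_k}{r_k^2\,d^{-1/2}\|\mathbf{b}_k\|},\qquad \eta^e_k=A_k\bigl(1-A_k\langle\mathbf{c}_k,\mathbf{u}_k\rangle\bigr)^{-1},$$ and $\mathbf{c}_k^{\perp}=\mathbf{c}_k-\langle\mathbf{c}_k,\mathbf{u}_k\rangle\mathbf{u}_k$. Assume $1-A_k\langle\mathbf{c}_k,\mathbf{u}_k\rangle>0$. Then $\mathbf{x}_{k+1}\neq\mathbf{0}$, and with $\mathbf{u}_{k+1}=\mathbf{x}_{k+1}/\|\mathbf{x}_{k+1}\|$,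 $$\mathbf{u}_{k+1}=\frac{\mathbf{u}_k-\eta^e_k\mathbf{c}_k^{\perp}}{\sqrt{1+(\eta^e_k\|\mathbf{c}_k^{\perp}\|)^2}};$$ moreover $$\mathbf{u}_{k+1}=\operatorname{Exp}_{\mathbf{u}_k}\!\Bigl(-\bigl[1+O\bigl((\eta^e_k\|\mathbf{c}_k^{\perp}\|)^2\bigr)\bigr]\eta^e_k\mathbf{c}_k^{\perp}\Bigr),$$ where the bracketed scalar factor is $1+O(z^2)$ as $z=\eta^e_k\|\mathbf{c}_k^{\perp}\|\to 0$.
   Context: $\oslash$ denotes element-wise (Hadamard) division, $\|\cdot\|$ the Euclidean norm, $\langle\cdot,\cdot\rangle$ the Euclidean inner product. $\mathcal{S}_{d-1}=\{\mathbf{u}\in\mathbb{R}^d:\|\mathbf{u}\|=1\}$ is the unit sphere with its canonical (angular) metric, and $\operatorname{Exp}_{\mathbf{u}}$ is its exponential map at $\mathbf{u}$: for $\mathbf{w}$ tangent at $\mathbf{u}$ ($\langle\mathbf{w},\mathbf{u}\rangle=0$), $\operatorname{Exp}_{\mathbf{u}}(\mathbf{w})=\cos(\|\mathbf{w}\|)\mathbf{u}+\sin(\|\mathbf{w}\|)\mathbf{w}/\|\mathbf{w}\|$ (and $\operatorname{Exp}_{\mathbf{u}}(\mathbf{0})=\mathbf{u}$). *)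

theory Defs
  imports "HOL-Analysis.Analysis" "HOL-Library.Landau_Symbols"
begin

definition hdiv :: "real^'n \<Rightarrow> real^'n \<Rightarrow> real^'n" where
  "hdiv a b = (\<chi> i. a $ i / b $ i)"

definition sphere_Exp :: "real^'n \<Rightarrow> real^'n \<Rightarrow> real^'n" where
  "sphere_Exp u w = (if w = 0 then u
     else cos (norm w) *\<^sub>R u + sin (norm w) *\<^sub>R (w /\<^sub>R norm w))"

definition radially_invariant :: "(real^'n \<Rightarrow> real) \<Rightarrow> bool" where
  "radially_invariant L \<longleftrightarrow> (\<forall>x \<rho>. \<rho> > 0 \<longrightarrow> L (\<rho> *\<^sub>R x) = L x)"

end

theory Submission
  imports Defs
begin

(*
  With s_k = |b_k| / sqrt d, the definitions of c_k and A_k turn the update into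
  x_(k+1) = r_k (u_k - A_k c_k).  Splitting c_k into its radial part <c_k, u_k> u_k and its
  tangential part c_k^perp gives x_(k+1) = r_k (1 - A_k <c_k, u_k>) (u_k - ee_k c_k^perp), a positive
  multiple of u_k - ee_k c_k^perp, whose norm is sqrt (1 + z^2) with z = ee_k |c_k^perp| by
  Pythagoras.  The normalised vector is cos (arctan z) u_k - sin (arctan z) c_k^perp / |c_k^perp|,
  the point at angle arctan z on the great circle leaving u_k in direction -c_k^perp, i.e.
  Exp_(u_k) applied to -(arctan z / z) ee_k c_k^perp, and arctan z / z = 1 + O(z^2).
*)

definition arctan_ratio :: "real \<Rightarrow> real" where
  "arctan_ratio z = (if z = 0 then 1 else arctan z / z)"

lemma abs_arctan_minus_self_le:
  fixes z :: real
  assumes "\<bar>z\<bar> < 1"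
  shows "\<bar>arctan z - z\<bar> \<le> \<bar>z\<bar> ^ 3 / 3"
proof -
  have "\<bar>z\<bar> - \<bar>z\<bar> ^ 3 / 3 \<le> arctan (\<bar>z\<bar>)"
    using arctan_lower_bound[of "\<bar>z\<bar>" 1] assms
    by (simp add: numeral_2_eq_2 power3_eq_cube mult.assoc)
  moreover have "\<bar>arctan z - z\<bar> = \<bar>z\<bar> - arctan (\<bar>z\<bar>)"
    using arctan_le_self[of "\<bar>z\<bar>"] by (cases "z \<ge> 0") (simp_all add: arctan_minus)
  ultimately show ?thesis
    by linarith
qed

lemma arctan_ratio_minus_one_bigo: "(\<lambda>z. arctan_ratio z - 1) \<in> O[at 0](\<lambda>z. z ^ 2)"
proof (rule bigoI[where c = "1/3"])
  have "norm (arctan_ratio z - 1) \<le> 1/3 * norm (z ^ 2)" if "z \<noteq> 0" "\<bar>z\<bar> < 1" for z :: real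
  proof -
    have "norm (arctan_ratio z - 1) = \<bar>arctan z - z\<bar> / \<bar>z\<bar>"
      using that by (simp add: arctan_ratio_def diff_divide_distrib flip: abs_divide)
    also have "\<dots> \<le> (\<bar>z\<bar> ^ 3 / 3) / \<bar>z\<bar>"
      by (rule divide_right_mono[OF abs_arctan_minus_self_le[OF that(2)]]) simp
    also have "\<dots> = 1/3 * norm (z ^ 2)"
      using that by (simp add: power2_eq_square power3_eq_cube)
    finally show ?thesis .
  qed
  then show "\<forall>\<^sub>F z in at 0. norm (arctan_ratio z - 1) \<le> 1/3 * norm (z ^ 2)"
    unfolding eventually_at by (intro exI[of _ 1]) auto
qed

lemma hdiv_divideR_right: "hdiv a (b /\<^sub>R s) = s *\<^sub>R hdiv a b"
  by (cases "s = 0") (simp_all add: hdiv_def vec_eq_iff field_simps)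

lemma sphere_Exp_along:
  fixes u v :: "real^'n"
  assumes "v \<noteq> 0"
  shows "sphere_Exp u ((\<theta> / norm v) *\<^sub>R v) = cos \<theta> *\<^sub>R u + (sin \<theta> / norm v) *\<^sub>R v"
proof (cases "\<theta> = 0")
  case False
  define w where "w = (\<theta> / norm v) *\<^sub>R v"
  have "norm w = \<bar>\<theta>\<bar>"
    using assms by (simp add: w_def)
  moreover have "sin \<bar>\<theta>\<bar> * inverse \<bar>\<theta>\<bar> * \<theta> = sin \<theta>"
    using False by (cases "\<theta> \<ge> 0") auto
  ultimately show ?thesis
    using False assms by (simp add: sphere_Exp_def w_def[symmetric]) (simp add: w_def)
qed (simp add: sphere_Exp_def)

lemma sphere_Exp_arctan_ratio:
  fixes u v :: "real^'n"
  shows "sphere_Exp u (- (arctan_ratio (t * norm v) * t) *\<^sub>R v) =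
    (u - t *\<^sub>R v) /\<^sub>R sqrt (1 + (t * norm v) ^ 2)"
proof (cases "t = 0 \<or> v = 0")
  case False
  define z where "z = t * norm v"
  have "- (arctan_ratio z * t) = - arctan z / norm v"
    using False by (simp add: z_def arctan_ratio_def)
  then have "sphere_Exp u (- (arctan_ratio z * t) *\<^sub>R v) =
      cos (- arctan z) *\<^sub>R u + (sin (- arctan z) / norm v) *\<^sub>R v"
    using False sphere_Exp_along[of v u "- arctan z"] by simp
  also have "\<dots> = (u - t *\<^sub>R v) /\<^sub>R sqrt (1 + z ^ 2)"
    using False by (simp add: cos_arctan sin_arctan z_def algebra_simps divide_inverse)
  finally show ?thesis
    by (simp add: z_def)
qed (auto simp: sphere_Exp_def arctan_ratio_def)

lemma norm_diff_tangent:
  fixes u v :: "'a::real_inner"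
  assumes "norm u = 1" and "v \<bullet> u = 0"
  shows "norm (u - t *\<^sub>R v) = sqrt (1 + (t * norm v) ^ 2)"
proof -
  have "orthogonal u (- t *\<^sub>R v)"
    using assms(2) by (simp add: orthogonal_def inner_commute)
  then have "norm (u - t *\<^sub>R v) ^ 2 = 1 + (t * norm v) ^ 2"
    using norm_add_Pythagorean assms(1) by (fastforce simp: power_mult_distrib)
  then show ?thesis
    by (simp add: real_sqrt_unique)
qed

lemma diff_scaleR_tangent_decomposition:
  fixes u c :: "'a::real_inner"
  assumes "1 - A * (c \<bullet> u) \<noteq> 0"
  shows "u - A *\<^sub>R c =
    (1 - A * (c \<bullet> u)) *\<^sub>R (u - (A / (1 - A * (c \<bullet> u))) *\<^sub>R (c - (c \<bullet> u) *\<^sub>R u))"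
    (is "_ = ?D *\<^sub>R (u - (A / ?D) *\<^sub>R ?cp)")
proof -
  have "?D *\<^sub>R (u - (A / ?D) *\<^sub>R ?cp) = ?D *\<^sub>R u - A *\<^sub>R ?cp"
    using assms by (simp add: scaleR_diff_right)
  also have "\<dots> = u - A *\<^sub>R c"
    by (simp add: algebra_simps)
  finally show ?thesis ..
qed

lemma normalized_update:
  fixes x x' a b :: "real^'n" and eta :: real
  assumes update: "x' = x - eta *\<^sub>R hdiv a b" and "x \<noteq> 0" and "b \<noteq> 0"
    and r_def: "r = norm x" and u_def: "u = x /\<^sub>R r"
    and s_def: "s = norm b / sqrt (real CARD('n))" and c_def: "c = r *\<^sub>R hdiv a (b /\<^sub>R s)"
    and A_def: "A = eta / (r ^ 2 * s)" and ee_def: "ee = A / (1 - A * (c \<bullet> u))"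
    and cp_def: "cp = c - (c \<bullet> u) *\<^sub>R u"
    and D: "1 - A * (c \<bullet> u) > 0"
  shows "x' \<noteq> 0" and "x' /\<^sub>R norm x' = (u - ee *\<^sub>R cp) /\<^sub>R sqrt (1 + (ee * norm cp) ^ 2)"
proof -
  have r: "r > 0" and s: "s > 0"
    using assms(2,3) by (simp_all add: r_def s_def)
  have u: "norm u = 1"
    using r by (simp add: u_def r_def)
  moreover have "cp \<bullet> u = 0"
    using u by (simp add: cp_def inner_diff_left dot_square_norm)
  ultimately have norm_tangent: "norm (u - ee *\<^sub>R cp) = sqrt (1 + (ee * norm cp) ^ 2)"
    by (rule norm_diff_tangent)
  have "eta *\<^sub>R hdiv a b = (r * A) *\<^sub>R c"
    using r s by (simp add: c_def A_def hdiv_divideR_right power2_eq_square)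
  then have "x' = r *\<^sub>R (u - A *\<^sub>R c)"
    using r by (simp add: update u_def scaleR_diff_right)
  also have "\<dots> = (r * (1 - A * (c \<bullet> u))) *\<^sub>R (u - ee *\<^sub>R cp)"
    using D by (simp add: diff_scaleR_tangent_decomposition[of A c u] ee_def cp_def)
  finally have x': "x' = (r * (1 - A * (c \<bullet> u))) *\<^sub>R (u - ee *\<^sub>R cp)" .
  have "norm (u - ee *\<^sub>R cp) > 0"
    unfolding norm_tangent by (simp add: add_pos_nonneg)
  then have "u - ee *\<^sub>R cp \<noteq> 0"
    by auto
  then show "x' \<noteq> 0"
    using r D x' by simp
  have "x' /\<^sub>R norm x' = sgn x'"
    by (simp add: sgn_div_norm)
  also have "\<dots> = sgn (u - ee *\<^sub>R cp)"
    using r D by (simp add: x' sgn_scaleR)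
  also have "\<dots> = (u - ee *\<^sub>R cp) /\<^sub>R sqrt (1 + (ee * norm cp) ^ 2)"
    by (simp add: sgn_div_norm norm_tangent)
  finally show "x' /\<^sub>R norm x' = (u - ee *\<^sub>R cp) /\<^sub>R sqrt (1 + (ee * norm cp) ^ 2)" .
qed

theorem theorem2:
  "\<exists>\<phi> :: real \<Rightarrow> real. (\<lambda>z. \<phi> z - 1) \<in> O[at 0](\<lambda>z. z ^ 2) \<and>
    (\<forall>(L :: real^'n \<Rightarrow> real) (grad :: real^'n \<Rightarrow> real^'n)
       (x :: nat \<Rightarrow> real^'n) (a :: nat \<Rightarrow> real^'n) (b :: nat \<Rightarrow> real^'n)
       (eta :: nat \<Rightarrow> real) (\<beta> :: real) (lam :: real) (k :: nat).
      ((\<forall>y. y \<noteq> 0 \<longrightarrow> (L has_derivative (\<lambda>h. grad y \<bullet> h)) (at y)) \<and>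
       radially_invariant L \<and>
       (\<forall>j. eta j > 0) \<and>
       (\<forall>j i. b j $ i \<noteq> 0) \<and>
       a 0 = grad (x 0) + lam *\<^sub>R x 0 \<and>
       (\<forall>j. a (Suc j) = \<beta> *\<^sub>R a j + grad (x (Suc j)) + lam *\<^sub>R x (Suc j)) \<and>
       (\<forall>j. x (Suc j) = x j - eta j *\<^sub>R hdiv (a j) (b j)) \<and>
       x k \<noteq> 0)
      \<longrightarrow>
      (let r = norm (x k);
           u = x k /\<^sub>R r;
           s = norm (b k) / sqrt (real CARD('n));
           c = r *\<^sub>R hdiv (a k) (b k /\<^sub>R s);
           A = eta k / (r ^ 2 * s);
           ee = A / (1 - A * (c \<bullet> u));
           cp = c - (c \<bullet> u) *\<^sub>R u;
           u1 = x (Suc k) /\<^sub>R norm (x (Suc k))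
       in 1 - A * (c \<bullet> u) > 0 \<longrightarrow>
          x (Suc k) \<noteq> 0 \<and>
          u1 = (u - ee *\<^sub>R cp) /\<^sub>R sqrt (1 + (ee * norm cp) ^ 2) \<and>
          u1 = sphere_Exp u (- (\<phi> (ee * norm cp) * ee) *\<^sub>R cp)))"
  apply (intro exI[of _ arctan_ratio] conjI arctan_ratio_minus_one_bigo allI impI)
  subgoal premises H for L grad x a b eta \<beta> lam k
  proof -
    from H have "x (Suc k) = x k - eta k *\<^sub>R hdiv (a k) (b k)" and "x k \<noteq> 0" and "b k \<noteq> 0"
      by (auto simp: vec_eq_iff)
    note step = normalized_update[OF this refl refl refl refl refl refl refl]
    show ?thesis
      unfolding Let_def sphere_Exp_arctan_ratio using step by blast
  qed
  done

end
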